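(* Let $V$ be a complex Banach space, $H$ a commutative monoid generated by $\varpi_1,\dots,\varpi_n$, and $h\mapsto T_h$ a monoid homomorphism into the bounded operators on $V$ with $T_e=\mathrm{id}_V$; put $T_j=T_{\varpi_j}$. Let $\chi$ be a character of $\mathbb C[X_1,\dots,X_n]$, $\lambda_i=\chi(X_i)$, and suppose there is $h\in H^\circ$ with a representation $h=\sum_i\ell_i\varpi_i$ ($\ell_i\in\mathbb N_0$) such that $|\prod_i\lambda_i^{\ell_i}|>r_{\mathrm{ess}}(T_h)$. Then $\chi$ is a Fredholm character, i.e. $\dim_{\mathbb C}\mathrm{Tor}_i^{\mathbb C[X]}(\mathbb C_\chi,V_T)<\infty$ for all $i$ and $=0$ for all but finitely many $i$.
   Context: $H^\circ=\{h\in H:T_h$ quasi-compact$\}$; $T$ is quasi-compact if $r_{\mathrm{ess}}(T)<r(T)$ (spectral radius), where $r_{\mathrm{ess}}(T)=\inf\{r>0:\lambda-T$ Fredholm of index zero for all $|\lambda|\ge r\}$. $V_T$ is $V$ as a $\mathbb C[X]$-module with $X_j$ acting by $T_j$; $\mathrm{Tor}_p^{\mathbb C[X]}(\mathbb C_\chi,V_T)$ is the $p$-th homology of the Koszul complex $\Lambda^p\mathbb C^n\otimes V\to\Lambda^{p-1}\mathbb C^n\otimes V$, $e_{i_1}\wedge\dots\wedge e_{i_p}\otimes x\mapsto\sum_k(-1)^ke_{i_1}\wedge\cdots\widehat{e_{i_k}}\cdots\wedge e_{i_p}\otimes(T_{i_k}-\lambda_{i_k})x$. *)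

theory Defs
  imports "HOL-Analysis.Analysis" "HOL-Library.Function_Algebras"
begin

definition complex_structure :: "(complex \<Rightarrow> 'v::banach \<Rightarrow> 'v) \<Rightarrow> bool" where
  "complex_structure smul \<longleftrightarrow>
     (\<forall>r x. smul (complex_of_real r) x = r *\<^sub>R x) \<and>
     (\<forall>a x y. smul a (x + y) = smul a x + smul a y) \<and>
     (\<forall>a b x. smul (a + b) x = smul a x + smul b x) \<and>
     (\<forall>a b x. smul (a * b) x = smul a (smul b x)) \<and>
     (\<forall>a x. norm (smul a x) = cmod a * norm x)"

definition bounded_clin :: "(complex \<Rightarrow> 'v::banach \<Rightarrow> 'v) \<Rightarrow> ('v \<Rightarrow> 'v) \<Rightarrow> bool" where
  "bounded_clin smul A \<longleftrightarrow> bounded_linear A \<and> (\<forall>c x. A (smul c x) = smul c (A x))"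

definition cspan :: "(complex \<Rightarrow> 'b::comm_monoid_add \<Rightarrow> 'b) \<Rightarrow> 'b set \<Rightarrow> 'b set" where
  "cspan sc S = {\<Sum>x\<in>F. sc (a x) x | F a. finite F \<and> F \<subseteq> S}"

text \<open>For subspaces B \<subseteq> Z: the quotient Z/B is finite dimensional, and its dimension
  (= least cardinality of a subset of Z spanning Z modulo B).\<close>
definition qspans :: "(complex \<Rightarrow> 'b::ab_group_add \<Rightarrow> 'b) \<Rightarrow> 'b set \<Rightarrow> 'b set \<Rightarrow> 'b set \<Rightarrow> bool" where
  "qspans sc B Z F \<longleftrightarrow> finite F \<and> F \<subseteq> Z \<and> Z \<subseteq> {b + v | b v. b \<in> B \<and> v \<in> cspan sc F}"

definition qfin :: "(complex \<Rightarrow> 'b::ab_group_add \<Rightarrow> 'b) \<Rightarrow> 'b set \<Rightarrow> 'b set \<Rightarrow> bool" where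
  "qfin sc B Z \<longleftrightarrow> (\<exists>F. qspans sc B Z F)"

definition qdim :: "(complex \<Rightarrow> 'b::ab_group_add \<Rightarrow> 'b) \<Rightarrow> 'b set \<Rightarrow> 'b set \<Rightarrow> nat" where
  "qdim sc B Z = (LEAST k. \<exists>F. qspans sc B Z F \<and> card F = k)"

definition fredholm_index0 :: "(complex \<Rightarrow> 'v::banach \<Rightarrow> 'v) \<Rightarrow> ('v \<Rightarrow> 'v) \<Rightarrow> bool" where
  "fredholm_index0 smul A \<longleftrightarrow>
     qfin smul {0} {x. A x = 0} \<and> qfin smul (range A) UNIV \<and>
     qdim smul {0} {x. A x = 0} = qdim smul (range A) UNIV"

definition spectrum_op :: "(complex \<Rightarrow> 'v::banach \<Rightarrow> 'v) \<Rightarrow> ('v \<Rightarrow> 'v) \<Rightarrow> complex set" where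
  "spectrum_op smul T = {z. \<not> bij (\<lambda>x. smul z x - T x)}"

definition spec_rad :: "(complex \<Rightarrow> 'v::banach \<Rightarrow> 'v) \<Rightarrow> ('v \<Rightarrow> 'v) \<Rightarrow> real" where
  "spec_rad smul T = Sup (cmod ` spectrum_op smul T)"

definition ess_rad :: "(complex \<Rightarrow> 'v::banach \<Rightarrow> 'v) \<Rightarrow> ('v \<Rightarrow> 'v) \<Rightarrow> real" where
  "ess_rad smul T = Inf {r. r > 0 \<and> (\<forall>z. cmod z \<ge> r \<longrightarrow> fredholm_index0 smul (\<lambda>x. smul z x - T x))}"

definition quasi_compact :: "(complex \<Rightarrow> 'v::banach \<Rightarrow> 'v) \<Rightarrow> ('v \<Rightarrow> 'v) \<Rightarrow> bool" where
  "quasi_compact smul T \<longleftrightarrow> ess_rad smul T < spec_rad smul T"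

definition msum :: "(nat \<Rightarrow> 'h::comm_monoid_add) \<Rightarrow> (nat \<Rightarrow> nat) \<Rightarrow> nat \<Rightarrow> 'h" where
  "msum w l n = (\<Sum>i<n. \<Sum>k<l i. w i)"

text \<open>Koszul complex: \<Lambda>^p C^n \<otimes> V is represented by coefficient functions on the
  p-element subsets of {0..<n} (basis e_I, I increasing), vanishing elsewhere.\<close>
definition kchains :: "nat \<Rightarrow> nat \<Rightarrow> (nat set \<Rightarrow> 'v::zero) set" where
  "kchains n p = {c. \<forall>J. c J \<noteq> 0 \<longrightarrow> J \<subseteq> {..<n} \<and> card J = p}"

definition kdiff :: "(complex \<Rightarrow> 'v::banach \<Rightarrow> 'v) \<Rightarrow> (nat \<Rightarrow> 'v \<Rightarrow> 'v) \<Rightarrow> (nat \<Rightarrow> complex) \<Rightarrow> nat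
                    \<Rightarrow> (nat set \<Rightarrow> 'v) \<Rightarrow> (nat set \<Rightarrow> 'v)" where
  "kdiff smul Tj lam n c = (\<lambda>J. \<Sum>i\<in>{..<n} - J.
      ((-1) ^ (card {j\<in>J. j < i} + 1)) *\<^sub>R (Tj i (c (insert i J)) - smul (lam i) (c (insert i J))))"

definition cscale :: "(complex \<Rightarrow> 'v \<Rightarrow> 'v) \<Rightarrow> complex \<Rightarrow> (nat set \<Rightarrow> 'v) \<Rightarrow> (nat set \<Rightarrow> 'v)" where
  "cscale smul a c = (\<lambda>J. smul a (c J))"

definition kcycles :: "(complex \<Rightarrow> 'v::banach \<Rightarrow> 'v) \<Rightarrow> (nat \<Rightarrow> 'v \<Rightarrow> 'v) \<Rightarrow> (nat \<Rightarrow> complex) \<Rightarrow> nat \<Rightarrow> nat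
                     \<Rightarrow> (nat set \<Rightarrow> 'v) set" where
  "kcycles smul Tj lam n p = {c \<in> kchains n p. kdiff smul Tj lam n c = 0}"

definition kbounds :: "(complex \<Rightarrow> 'v::banach \<Rightarrow> 'v) \<Rightarrow> (nat \<Rightarrow> 'v \<Rightarrow> 'v) \<Rightarrow> (nat \<Rightarrow> complex) \<Rightarrow> nat \<Rightarrow> nat
                     \<Rightarrow> (nat set \<Rightarrow> 'v) set" where
  "kbounds smul Tj lam n p = kdiff smul Tj lam n ` kchains n (Suc p)"

definition tor_fin :: "(complex \<Rightarrow> 'v::banach \<Rightarrow> 'v) \<Rightarrow> (nat \<Rightarrow> 'v \<Rightarrow> 'v) \<Rightarrow> (nat \<Rightarrow> complex) \<Rightarrow> nat \<Rightarrow> nat \<Rightarrow> bool" where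
  "tor_fin smul Tj lam n p = qfin (cscale smul) (kbounds smul Tj lam n p) (kcycles smul Tj lam n p)"

definition tor_dim :: "(complex \<Rightarrow> 'v::banach \<Rightarrow> 'v) \<Rightarrow> (nat \<Rightarrow> 'v \<Rightarrow> 'v) \<Rightarrow> (nat \<Rightarrow> complex) \<Rightarrow> nat \<Rightarrow> nat \<Rightarrow> nat" where
  "tor_dim smul Tj lam n p = qdim (cscale smul) (kbounds smul Tj lam n p) (kcycles smul Tj lam n p)"

definition fredholm_character :: "(complex \<Rightarrow> 'v::banach \<Rightarrow> 'v) \<Rightarrow> (nat \<Rightarrow> 'v \<Rightarrow> 'v) \<Rightarrow> (nat \<Rightarrow> complex) \<Rightarrow> nat \<Rightarrow> bool" where
  "fredholm_character smul Tj lam n \<longleftrightarrow>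
     (\<forall>p. tor_fin smul Tj lam n p) \<and> finite {p. tor_dim smul Tj lam n p \<noteq> 0}"

end

theory Submission
  imports Defs
begin

text \<open>
  For each i, exterior multiplication by e_i is a homotopy on the Koszul complex showing that
  T_i - lambda_i maps cycles to boundaries. As h -> T_h is multiplicative, T_h - mu with
  mu = prod_i lambda_i^(l_i) therefore acts by zero on every Tor_p. Since |mu| > r_ess(T_h), the
  operator A = mu - T_h is Fredholm; it commutes with the differential and kills the homology, so
  each cycle is, modulo boundaries, controlled by the finite-dimensional kernel and cokernel of A,
  and Tor_p is finite-dimensional. Tor_p vanishes for p > n, as there are no p-element subsets of
  {0..<n}.
\<close>

section \<open>Complex Banach spaces\<close>

locale complex_banach =
  fixes smul :: "complex \<Rightarrow> 'v::banach \<Rightarrow> 'v"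
  assumes complex_structure: "complex_structure smul"
begin

lemma smul_of_real: "smul (complex_of_real r) x = r *\<^sub>R x"
  using complex_structure unfolding complex_structure_def by blast

lemma smul_add_right: "smul a (x + y) = smul a x + smul a y"
  using complex_structure unfolding complex_structure_def by blast

lemma smul_add_left: "smul (a + b) x = smul a x + smul b x"
  using complex_structure unfolding complex_structure_def by blast

lemma smul_smul: "smul a (smul b x) = smul (a * b) x"
  using complex_structure unfolding complex_structure_def by metis

lemma norm_smul: "norm (smul a x) = cmod a * norm x"
  using complex_structure unfolding complex_structure_def by blast

lemma smul_one: "smul 1 x = x"
  using smul_of_real[of 1 x] by simp

sublocale V: vector_space smul
  by unfold_locales (auto simp: smul_add_right smul_add_left smul_smul smul_one)

sublocale C: vector_space "cscale smul"
  by unfold_locales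
    (auto simp: cscale_def fun_eq_iff V.scale_right_distrib V.scale_left_distrib)

sublocale VV: vector_space_pair smul smul ..
sublocale CC: vector_space_pair "cscale smul" "cscale smul" ..

abbreviation clinear :: "('v \<Rightarrow> 'v) \<Rightarrow> bool" where
  "clinear \<equiv> Vector_Spaces.linear smul smul"

lemma cspan_eq_span: "cspan smul S = V.span S"
  unfolding cspan_def V.span_explicit by blast

lemma cspan_cscale_eq_span: "cspan (cscale smul) S = C.span S"
  unfolding cspan_def C.span_explicit by blast

lemma clinear_if_bounded_clin:
  assumes "bounded_clin smul A"
  shows "clinear A"
proof -
  have "A (x + y) = A x + A y" for x y
    using assms unfolding bounded_clin_def by (simp add: bounded_linear.axioms(1) linear_add)
  moreover have "A (smul c x) = smul c (A x)" for c x
    using assms unfolding bounded_clin_def by blast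
  ultimately show ?thesis
    unfolding Vector_Spaces.linear_iff using V.vector_space_axioms by blast
qed

lemma clinear_smul: "clinear (smul a)"
  unfolding Vector_Spaces.linear_iff using V.vector_space_axioms
  by (simp add: smul_add_right mult.commute)

lemma clinear_comp_left:
  assumes "clinear A"
  shows "Vector_Spaces.linear (cscale smul) (cscale smul) ((\<circ>) A)"
proof -
  have "A \<circ> (c1 + c2) = (A \<circ> c1) + (A \<circ> c2)" for c1 c2 :: "nat set \<Rightarrow> 'v"
    by (simp add: fun_eq_iff VV.linear_add[OF assms])
  moreover have "A \<circ> cscale smul a c = cscale smul a (A \<circ> c)" for a c
    by (simp add: fun_eq_iff cscale_def VV.linear_scale[OF assms])
  ultimately show ?thesis
    unfolding Vector_Spaces.linear_iff using C.vector_space_axioms by blast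
qed

end

section \<open>Finite-dimensional quotients\<close>

lemma qdim_eq_0: "qspans sc B Z {} \<Longrightarrow> qdim sc B Z = 0"
  unfolding qdim_def by (rule Least_eq_0) auto

lemma (in vector_space) finite_preimages:
  assumes "finite E" "Vector_Spaces.linear scale scale f" "Vector_Spaces.linear scale scale g"
  obtains X where "finite X" "X \<subseteq> D"
    "\<And>c x. c \<in> span E \<Longrightarrow> x \<in> D \<Longrightarrow> f c = g x \<Longrightarrow> \<exists>x'\<in>span X. f c = g x'"
proof -
  interpret f: module_hom scale scale f using assms(2) by (rule module_hom_linearI)
  interpret g: module_hom scale scale g using assms(3) by (rule module_hom_linearI)
  define E' where "E' = {c \<in> span E. \<exists>x\<in>D. f c = g x}"
  obtain B where B: "B \<subseteq> E'" "independent B" "E' \<subseteq> span B"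
    using maximal_independent_subset[of E'] by blast
  have "B \<subseteq> span E" using B(1) unfolding E'_def by blast
  then have "finite B" using independent_span_bound[OF assms(1) B(2)] by blast
  have "\<forall>b\<in>B. \<exists>x. x \<in> D \<and> f b = g x" using B(1) unfolding E'_def by blast
  then obtain X where X: "\<And>b. b \<in> B \<Longrightarrow> X b \<in> D \<and> f b = g (X b)" by metis
  show ?thesis
  proof (rule that[of "X ` B"])
    show "finite (X ` B)" using \<open>finite B\<close> by simp
    show "X ` B \<subseteq> D" using X by blast
    fix c x assume "c \<in> span E" "x \<in> D" "f c = g x"
    then have "c \<in> span B" using B(3) unfolding E'_def by blast
    then obtain r where r: "c = (\<Sum>b\<in>B. scale (r b) b)"
      using span_finite[OF \<open>finite B\<close>] by auto
    have "f c = (\<Sum>b\<in>B. scale (r b) (g (X b)))"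
      unfolding r f.sum f.scale using X by simp
    also have "\<dots> = g (\<Sum>b\<in>B. scale (r b) (X b))"
      by (simp add: g.sum g.scale)
    moreover have "(\<Sum>b\<in>B. scale (r b) (X b)) \<in> span (X ` B)"
      by (intro span_sum span_scale span_base) auto
    ultimately show "\<exists>x'\<in>span (X ` B). f c = g x'" by auto
  qed
qed

lemma qfin_if_subset_plus_span:
  fixes sc :: "complex \<Rightarrow> 'b::ab_group_add \<Rightarrow> 'b"
  assumes "vector_space sc" "module.subspace sc B" "finite G"
    and "Z \<subseteq> {b + v | b v. b \<in> B \<and> v \<in> module.span sc G}"
  shows "qfin sc B Z"
proof -
  interpret vector_space sc by fact
  have cspan_eq: "cspan sc S = span S" for S
    unfolding cspan_def span_explicit by blast
  define U where "U = {v \<in> span G. \<exists>b\<in>B. b + v \<in> Z}"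
  obtain W where W: "W \<subseteq> U" "independent W" "U \<subseteq> span W"
    using maximal_independent_subset[of U] by blast
  have "W \<subseteq> span G" using W(1) unfolding U_def by blast
  then have "finite W" using independent_span_bound[OF assms(3) W(2)] by blast
  have "\<forall>u\<in>W. \<exists>b. b \<in> B \<and> b + u \<in> Z" using W(1) unfolding U_def by blast
  then obtain b where b: "\<And>u. u \<in> W \<Longrightarrow> b u \<in> B \<and> b u + u \<in> Z" by metis
  define F where "F = (\<lambda>u. b u + u) ` W"
  have "z \<in> {b + v | b v. b \<in> B \<and> v \<in> cspan sc F}" if "z \<in> Z" for z
  proof -
    obtain b0 v where bv: "b0 \<in> B" "v \<in> span G" "z = b0 + v" using assms(4) \<open>z \<in> Z\<close> by blast
    then have "v \<in> span W" using W(3) \<open>z \<in> Z\<close> unfolding U_def by blast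
    then obtain r where r: "v = (\<Sum>u\<in>W. sc (r u) u)"
      using span_finite[OF \<open>finite W\<close>] by auto
    have "z = (b0 - (\<Sum>u\<in>W. sc (r u) (b u))) + (\<Sum>u\<in>W. sc (r u) (b u + u))"
      by (simp add: bv(3) r scale_right_distrib sum.distrib)
    moreover have "b0 - (\<Sum>u\<in>W. sc (r u) (b u)) \<in> B"
      using b bv(1) assms(2) by (simp add: subspace_diff subspace_sum subspace_scale)
    moreover have "(\<Sum>u\<in>W. sc (r u) (b u + u)) \<in> cspan sc F"
      unfolding F_def cspan_eq by (intro span_sum span_scale span_base) auto
    ultimately show ?thesis by blast
  qed
  moreover have "finite F" "F \<subseteq> Z" using \<open>finite W\<close> b unfolding F_def by auto
  ultimately show ?thesis unfolding qfin_def qspans_def by blast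
qed

section \<open>Fredholm operators\<close>

context complex_banach
begin

lemma fredholm_index0_if_bij:
  assumes "clinear A" "bij A"
  shows "fredholm_index0 smul A"
proof -
  have "qspans smul {0} {x. A x = 0} {}"
    using assms VV.linear_inj_iff_eq_0[OF assms(1)]
    unfolding qspans_def cspan_eq_span bij_def by auto
  moreover have "qspans smul (range A) UNIV {}"
    using assms unfolding qspans_def cspan_eq_span bij_def by force
  ultimately show ?thesis
    unfolding fredholm_index0_def qfin_def using qdim_eq_0 by metis
qed

lemma bij_smul_minus_if_norm_bound:
  assumes T: "clinear T" and K: "0 \<le> K" "\<And>x. norm (T x) \<le> K * norm x" and z: "K < cmod z"
  shows "bij (\<lambda>x. smul z x - T x)"
proof -
  have "z \<noteq> 0" using K z by auto
  have "x = 0" if "smul z x - T x = 0" for x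
  proof -
    have "cmod z * norm x \<le> K * norm x"
      using that K(2)[of x] norm_smul[of z x] by simp
    then have "(cmod z - K) * norm x \<le> 0" by (simp add: algebra_simps)
    then show "x = 0" using z by (simp add: mult_le_0_iff)
  qed
  then have "inj (\<lambda>x. smul z x - T x)"
    using VV.linear_inj_iff_eq_0[OF VV.linear_compose_sub[OF clinear_smul T]] by blast
  moreover have "\<exists>x. y = smul z x - T x" for y
  proof -
    define f where "f x = smul (inverse z) (y + T x)" for x
    have "dist (f a) (f b) \<le> (K / cmod z) * dist a b" for a b
    proof -
      have "f a - f b = smul (inverse z) (T (a - b))"
        by (simp add: f_def VV.linear_diff[OF T] flip: V.scale_right_diff_distrib)
      then have "dist (f a) (f b) = norm (T (a - b)) / cmod z"
        by (simp add: dist_norm norm_smul norm_inverse divide_inverse mult.commute)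
      also have "\<dots> \<le> K * norm (a - b) / cmod z"
        using K(2) by (simp add: divide_right_mono)
      finally show ?thesis by (simp add: dist_norm)
    qed
    moreover have "0 \<le> K / cmod z" "K / cmod z < 1"
      using K(1) z by (simp_all add: divide_less_eq)
    ultimately obtain x where "f x = x" using banach_fix_type[of "K / cmod z" f] by blast
    then have "smul z x = smul z (f x)" by simp
    also have "\<dots> = y + T x" using \<open>z \<noteq> 0\<close> by (simp add: f_def)
    finally show ?thesis by (intro exI[of _ x]) simp
  qed
  ultimately show ?thesis unfolding bij_def surj_def by blast
qed

lemma fredholm_index0_if_ess_rad_less:
  assumes T: "bounded_clin smul T" and \<mu>: "ess_rad smul T < cmod \<mu>"
  shows "fredholm_index0 smul (\<lambda>x. smul \<mu> x - T x)"
proof -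
  define R where
    "R = {r. r > 0 \<and> (\<forall>z. cmod z \<ge> r \<longrightarrow> fredholm_index0 smul (\<lambda>x. smul z x - T x))}"
  obtain K where K: "K > 0" "\<And>x. norm (T x) \<le> norm x * K"
    using T bounded_linear.pos_bounded unfolding bounded_clin_def by blast
  \<comment> \<open>Inf {} is unspecified, so R must be shown to be nonempty.\<close>
  have "fredholm_index0 smul (\<lambda>x. smul z x - T x)" if "K + 1 \<le> cmod z" for z
  proof (rule fredholm_index0_if_bij)
    show "clinear (\<lambda>x. smul z x - T x)"
      by (rule VV.linear_compose_sub[OF clinear_smul clinear_if_bounded_clin[OF T]])
    show "bij (\<lambda>x. smul z x - T x)"
      by (rule bij_smul_minus_if_norm_bound[OF clinear_if_bounded_clin[OF T], of K])
        (use K that in \<open>auto simp: mult.commute\<close>)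
  qed
  then have "K + 1 \<in> R" using K(1) unfolding R_def by auto
  then obtain r where "r \<in> R" "r < cmod \<mu>"
    using cInf_lessD[of R] \<mu> unfolding ess_rad_def R_def[symmetric] by blast
  then show ?thesis unfolding R_def by auto
qed

lemma fredholm_index0_finite_kernel_cokernel:
  assumes "fredholm_index0 smul A"
  obtains N Q where "finite N" "{x. A x = 0} \<subseteq> V.span N"
    and "finite Q" "\<And>x. \<exists>y. x - A y \<in> V.span Q"
proof -
  obtain N where N: "finite N" "{x. A x = 0} \<subseteq> {b + v | b v. b \<in> {0} \<and> v \<in> V.span N}"
    using assms unfolding fredholm_index0_def qfin_def qspans_def cspan_eq_span by blast
  obtain Q where Q: "finite Q" "UNIV \<subseteq> {b + v | b v. b \<in> range A \<and> v \<in> V.span Q}"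
    using assms unfolding fredholm_index0_def qfin_def qspans_def cspan_eq_span by blast
  have "{x. A x = 0} \<subseteq> V.span N"
  proof
    fix x assume "x \<in> {x. A x = 0}"
    then obtain v where "x = 0 + v" "v \<in> V.span N" using N(2) by blast
    then show "x \<in> V.span N" by simp
  qed
  moreover have "\<exists>y. x - A y \<in> V.span Q" for x
  proof -
    obtain y v where "x = A y + v" "v \<in> V.span Q" using Q(2) by blast
    then have "x - A y \<in> V.span Q" by simp
    then show ?thesis ..
  qed
  ultimately show ?thesis using that N(1) Q(1) by blast
qed

end

section \<open>The Koszul complex\<close>

definition koszul_sign :: "nat \<Rightarrow> nat set \<Rightarrow> real" where
  "koszul_sign i K = (-1) ^ (card {j\<in>K. j < i} + 1)"

lemma koszul_sign_square: "koszul_sign i K * koszul_sign i K = 1"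
  by (simp add: koszul_sign_def flip: power_add)

lemma card_less_insert:
  fixes K :: "nat set"
  assumes "i \<notin> K"
  shows "card {j\<in>insert i K. j < k} = card {j\<in>K. j < k} + (if i < k then 1 else 0)"
proof (cases "i < k")
  case True
  then have "{j\<in>insert i K. j < k} = insert i {j\<in>K. j < k}" by auto
  then show ?thesis using True assms by simp
next
  case False
  then have "{j\<in>insert i K. j < k} = {j\<in>K. j < k}" by auto
  then show ?thesis using False by simp
qed

lemma koszul_sign_swap:
  assumes "i \<noteq> k" "i \<notin> K" "k \<notin> K"
  shows "koszul_sign k (insert i K) * koszul_sign i (insert k K) = - (koszul_sign k K * koszul_sign i K)"
proof -
  have "(if i < k then 1 else 0) + (if k < i then 1 else (0::nat)) = 1" using assms(1) by auto
  then show ?thesis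
    unfolding koszul_sign_def card_less_insert[OF assms(2)] card_less_insert[OF assms(3)]
    by (cases "i < k") (auto simp: power_add)
qed

lemma sum_fun_apply: "(\<Sum>a\<in>A. f a) x = (\<Sum>a\<in>A. f a x)"
  by (induct A rule: infinite_finite_induct) auto

lemma kchains_iff: "c \<in> kchains n p \<longleftrightarrow> (\<forall>J. \<not> (J \<subseteq> {..<n} \<and> card J = p) \<longrightarrow> c J = 0)"
  unfolding kchains_def by blast

text \<open>The function 0(J := g) is the chain e_J \<otimes> g.\<close>

definition elementary_kchains :: "nat \<Rightarrow> nat \<Rightarrow> 'v set \<Rightarrow> (nat set \<Rightarrow> 'v::zero) set" where
  "elementary_kchains n q G = (\<lambda>(J, g). 0(J := g)) ` ({J. J \<subseteq> {..<n} \<and> card J = q} \<times> G)"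

lemma finite_card_subsets: "finite {J. J \<subseteq> {..<n::nat} \<and> card J = q}"
  by (rule finite_subset[of _ "Pow {..<n}"]) auto

lemma finite_elementary_kchains: "finite G \<Longrightarrow> finite (elementary_kchains n q G)"
  unfolding elementary_kchains_def using finite_card_subsets by simp

lemma kchains_eq_0_if_gt:
  assumes "n < p"
  shows "kchains n p = {0}"
proof -
  have "\<not> (J \<subseteq> {..<n} \<and> card J = p)" for J
    using assms card_mono[of "{..<n}" J] by auto
  then have "c \<in> kchains n p \<longleftrightarrow> c = 0" for c :: "nat set \<Rightarrow> 'v::zero"
    by (simp add: kchains_iff fun_eq_iff)
  then show ?thesis by blast
qed

context complex_banach
begin

lemma clinear_scaleR: "clinear A \<Longrightarrow> A (r *\<^sub>R x) = r *\<^sub>R A x"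
  by (simp add: VV.linear_scale flip: smul_of_real)

lemma subspace_kchains: "C.subspace (kchains n p)"
  unfolding C.subspace_def by (auto simp: kchains_iff cscale_def)

lemma comp_kchains: "clinear A \<Longrightarrow> c \<in> kchains n p \<Longrightarrow> A \<circ> c \<in> kchains n p"
  unfolding kchains_iff by (simp add: VV.linear_0)

lemma kchain_in_span_elementary:
  assumes c: "c \<in> kchains n q" and coeffs: "\<And>J. c J \<in> V.span G"
  shows "c \<in> C.span (elementary_kchains n q G)"
proof -
  let ?P = "{J. J \<subseteq> {..<n} \<and> card J = q}"
  have lin: "Vector_Spaces.linear smul (cscale smul) (\<lambda>g. 0(J := g))" for J :: "nat set"
    unfolding Vector_Spaces.linear_iff using V.vector_space_axioms C.vector_space_axioms
    by (auto simp: fun_eq_iff cscale_def)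
  have "0(J := c J) \<in> C.span (elementary_kchains n q G)" if "J \<in> ?P" for J
  proof -
    interpret e: Vector_Spaces.linear smul "cscale smul" "\<lambda>g. 0(J := g)"
      by (rule lin)
    have "0(J := c J) \<in> (\<lambda>g. 0(J := g)) ` V.span G" using coeffs by blast
    also have "\<dots> = C.span ((\<lambda>g. 0(J := g)) ` G)" by (rule e.span_image[symmetric])
    also have "\<dots> \<subseteq> C.span (elementary_kchains n q G)"
      using that by (intro C.span_mono) (auto simp: elementary_kchains_def)
    finally show ?thesis .
  qed
  then have "(\<Sum>J\<in>?P. 0(J := c J)) \<in> C.span (elementary_kchains n q G)"
    by (intro C.span_sum)
  moreover have "(\<Sum>J\<in>?P. 0(J := c J)) = c"
  proof
    fix K
    have "(\<Sum>J\<in>?P. 0(J := c J)) K = (\<Sum>J\<in>?P. if K = J then c J else 0)"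
      unfolding sum_fun_apply by (rule sum.cong) simp_all
    also have "\<dots> = (if K \<in> ?P then c K else 0)"
      using finite_card_subsets by (rule sum.delta')
    also have "\<dots> = c K" using c by (auto simp: kchains_iff)
    finally show "(\<Sum>J\<in>?P. 0(J := c J)) K = c K" .
  qed
  ultimately show ?thesis by simp
qed

lemma kchain_mod_range:
  assumes A: "clinear A" and Q: "\<And>x. \<exists>y. x - A y \<in> V.span Q" and u: "u \<in> kchains n q"
  obtains y where "y \<in> kchains n q" "u - (A \<circ> y) \<in> C.span (elementary_kchains n q Q)"
proof
  define y where "y J = (if u J = 0 then 0 else SOME y. u J - A y \<in> V.span Q)" for J
  show "y \<in> kchains n q"
    using u unfolding kchains_iff y_def by simp
  have coeff: "u J - A (y J) \<in> V.span Q" for J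
  proof (cases "u J = 0")
    case True
    then show ?thesis by (simp add: y_def VV.linear_0[OF A] V.span_zero)
  next
    case False
    then show ?thesis unfolding y_def using someI_ex[OF Q[of "u J"]] by simp
  qed
  have "u - (A \<circ> y) \<in> kchains n q"
    by (intro C.subspace_diff[OF subspace_kchains] u comp_kchains[OF A] \<open>y \<in> kchains n q\<close>)
  then show "u - (A \<circ> y) \<in> C.span (elementary_kchains n q Q)"
    by (rule kchain_in_span_elementary) (simp add: coeff)
qed

end

locale koszul_complex = complex_banach smul for smul :: "complex \<Rightarrow> 'v::banach \<Rightarrow> 'v" +
  fixes Tj :: "nat \<Rightarrow> 'v \<Rightarrow> 'v" and lam :: "nat \<Rightarrow> complex" and n :: nat
  assumes clinear_Tj: "clinear (Tj i)"
    and Tj_commute: "Tj i (Tj k x) = Tj k (Tj i x)"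
begin

abbreviation d :: "(nat set \<Rightarrow> 'v) \<Rightarrow> nat set \<Rightarrow> 'v" where
  "d \<equiv> kdiff smul Tj lam n"

definition shifted :: "nat \<Rightarrow> 'v \<Rightarrow> 'v" where
  "shifted i x = Tj i x - smul (lam i) x"

lemma clinear_shifted: "clinear (shifted i)"
  unfolding shifted_def[abs_def] by (rule VV.linear_compose_sub[OF clinear_Tj clinear_smul])

lemma kdiff_eq: "d c J = (\<Sum>i\<in>{..<n} - J. koszul_sign i J *\<^sub>R shifted i (c (insert i J)))"
  by (simp add: kdiff_def koszul_sign_def shifted_def)

lemma kdiff_comp:
  assumes A: "clinear A" and comm: "\<And>i x. A (Tj i x) = Tj i (A x)"
  shows "d (A \<circ> c) = A \<circ> d c"
proof -
  have "A (shifted i x) = shifted i (A x)" for i x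
    by (simp add: shifted_def VV.linear_diff[OF A] VV.linear_scale[OF A] comm)
  then show ?thesis
    by (simp add: fun_eq_iff kdiff_eq VV.linear_sum[OF A] clinear_scaleR[OF A])
qed

lemma linear_kdiff: "Vector_Spaces.linear (cscale smul) (cscale smul) d"
proof -
  have "d (c1 + c2) = d c1 + d c2" for c1 c2
    by (simp add: fun_eq_iff kdiff_eq VV.linear_add[OF clinear_shifted] scaleR_add_right sum.distrib)
  moreover have "d (cscale smul a c) = cscale smul a (d c)" for a c
  proof -
    have "cscale smul a c' = smul a \<circ> c'" for c' by (simp add: cscale_def fun_eq_iff)
    moreover have "d (smul a \<circ> c) = smul a \<circ> d c"
      by (rule kdiff_comp[OF clinear_smul]) (simp add: VV.linear_scale[OF clinear_Tj])
    ultimately show ?thesis by simp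
  qed
  ultimately show ?thesis
    unfolding Vector_Spaces.linear_iff using C.vector_space_axioms by blast
qed

lemma kdiff_kchains:
  assumes "c \<in> kchains n (Suc p)"
  shows "d c \<in> kchains n p"
  unfolding kchains_def
proof (intro CollectI allI impI)
  fix J assume "d c J \<noteq> 0"
  then obtain i where i: "i \<in> {..<n} - J" "c (insert i J) \<noteq> 0"
    unfolding kdiff_eq by (metis (no_types, lifting) VV.linear_0[OF clinear_shifted] scaleR_zero_right sum.neutral)
  then have "insert i J \<subseteq> {..<n}" "card (insert i J) = Suc p"
    using assms unfolding kchains_def by blast+
  moreover have "finite J" using \<open>insert i J \<subseteq> {..<n}\<close> finite_subset by auto
  ultimately show "J \<subseteq> {..<n} \<and> card J = p" using i(1) by auto
qed

lemma subspace_kbounds: "C.subspace (kbounds smul Tj lam n p)"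
  unfolding kbounds_def by (rule CC.linear_subspace_image[OF linear_kdiff subspace_kchains])

lemma comp_kbounds:
  assumes A: "clinear A" and comm: "\<And>i x. A (Tj i x) = Tj i (A x)"
    and b: "b \<in> kbounds smul Tj lam n p"
  shows "A \<circ> b \<in> kbounds smul Tj lam n p"
proof -
  obtain c where "c \<in> kchains n (Suc p)" "b = d c" using b unfolding kbounds_def by blast
  then have "A \<circ> b = d (A \<circ> c)" "A \<circ> c \<in> kchains n (Suc p)"
    using kdiff_comp[OF A comm, of c] comp_kchains[OF A] by auto
  then show ?thesis unfolding kbounds_def by blast
qed

lemma tor_dim_eq_0_if_gt:
  assumes "n < p"
  shows "tor_dim smul Tj lam n p = 0"
proof -
  have "kcycles smul Tj lam n p \<subseteq> {0}"
    unfolding kcycles_def kchains_eq_0_if_gt[OF assms] by blast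
  then have "qspans (cscale smul) (kbounds smul Tj lam n p) (kcycles smul Tj lam n p) {}"
    unfolding qspans_def cspan_cscale_eq_span C.span_empty
    using C.subspace_0[OF subspace_kbounds] by auto
  then show ?thesis unfolding tor_dim_def by (rule qdim_eq_0)
qed

definition kwedge :: "nat \<Rightarrow> (nat set \<Rightarrow> 'v) \<Rightarrow> nat set \<Rightarrow> 'v" where
  "kwedge i c = (\<lambda>J. if i \<in> J then koszul_sign i (J - {i}) *\<^sub>R c (J - {i}) else 0)"

lemma kwedge_kchains:
  assumes "i < n" "c \<in> kchains n p"
  shows "kwedge i c \<in> kchains n (Suc p)"
  unfolding kchains_def
proof (intro CollectI allI impI)
  fix J assume "kwedge i c J \<noteq> 0"
  then have "i \<in> J" "c (J - {i}) \<noteq> 0" unfolding kwedge_def by (auto split: if_splits)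
  then have sub: "J - {i} \<subseteq> {..<n}" and card: "card (J - {i}) = p"
    using assms(2) unfolding kchains_def by blast+
  have "finite (J - {i})" using sub by (rule finite_subset) simp
  then have "card J = Suc p" using card.remove[of J i] \<open>i \<in> J\<close> card by simp
  moreover have "J \<subseteq> {..<n}" using sub \<open>i \<in> J\<close> assms(1) by blast
  ultimately show "J \<subseteq> {..<n} \<and> card J = Suc p" by blast
qed

lemma kdiff_kwedge_notin:
  assumes "i < n" "i \<notin> J"
  shows "d (kwedge i c) J = shifted i (c J)"
proof -
  have "d (kwedge i c) J = (\<Sum>k\<in>{i}. koszul_sign k J *\<^sub>R shifted k (kwedge i c (insert k J)))"
    unfolding kdiff_eq using assms
    by (intro sum.mono_neutral_right) (auto simp: kwedge_def VV.linear_0[OF clinear_shifted])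
  also have "\<dots> = (koszul_sign i J * koszul_sign i J) *\<^sub>R shifted i (c J)"
    using assms(2) by (simp add: kwedge_def clinear_scaleR[OF clinear_shifted])
  finally show ?thesis by (simp add: koszul_sign_square)
qed

lemma kdiff_kwedge_in:
  assumes i: "i < n" "i \<in> J" and cycle: "d c (J - {i}) = 0"
  shows "d (kwedge i c) J = shifted i (c J)"
proof -
  define K where "K = J - {i}"
  have J: "J = insert i K" "i \<notin> K" using i(2) by (auto simp: K_def)
  let ?t = "\<lambda>k. koszul_sign k K *\<^sub>R shifted k (c (insert k K))"
  have "{..<n} - K = insert i ({..<n} - J)" using i by (auto simp: K_def)
  moreover have "d c K = 0" using cycle by (simp add: K_def)
  \<comment> \<open>Up to a common sign, the terms with k \<noteq> i are those of d c K = 0.\<close>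
  ultimately have "0 = ?t i + (\<Sum>k\<in>{..<n} - J. ?t k)"
    unfolding kdiff_eq using i(2) by simp
  then have rest: "(\<Sum>k\<in>{..<n} - J. ?t k) = - (koszul_sign i K *\<^sub>R shifted i (c J))"
    using J(1) by (simp add: eq_neg_iff_add_eq_0 add.commute)
  have "koszul_sign k J *\<^sub>R shifted k (kwedge i c (insert k J)) = (- koszul_sign i K) *\<^sub>R ?t k"
    if "k \<in> {..<n} - J" for k
  proof -
    have "k \<noteq> i" "k \<notin> K" "insert k J - {i} = insert k K" using that J by auto
    then have "koszul_sign k J *\<^sub>R shifted k (kwedge i c (insert k J))
        = (koszul_sign k (insert i K) * koszul_sign i (insert k K)) *\<^sub>R shifted k (c (insert k K))"
      using J by (simp add: kwedge_def clinear_scaleR[OF clinear_shifted])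
    also have "\<dots> = (- koszul_sign i K) *\<^sub>R ?t k"
      using koszul_sign_swap[of i k K] \<open>k \<noteq> i\<close> \<open>k \<notin> K\<close> J(2) by (simp add: mult.commute)
    finally show ?thesis .
  qed
  then have "d (kwedge i c) J = (- koszul_sign i K) *\<^sub>R (\<Sum>k\<in>{..<n} - J. ?t k)"
    unfolding kdiff_eq scaleR_sum_right by (rule sum.cong[OF refl])
  also have "\<dots> = (koszul_sign i K * koszul_sign i K) *\<^sub>R shifted i (c J)"
    unfolding rest by simp
  finally show ?thesis by (simp add: koszul_sign_square)
qed

lemma kdiff_kwedge:
  assumes "i < n" "c \<in> kcycles smul Tj lam n p"
  shows "d (kwedge i c) = shifted i \<circ> c"
proof
  fix J
  have "d c = 0" using assms(2) unfolding kcycles_def by blast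
  then show "d (kwedge i c) J = (shifted i \<circ> c) J"
    using kdiff_kwedge_notin[OF assms(1)] kdiff_kwedge_in[OF assms(1)] by (cases "i \<in> J") auto
qed

lemma shifted_kcycle_in_kbounds:
  assumes "i < n" "z \<in> kcycles smul Tj lam n p"
  shows "shifted i \<circ> z \<in> kbounds smul Tj lam n p"
proof -
  have "z \<in> kchains n p" using assms(2) unfolding kcycles_def by blast
  then have "kwedge i z \<in> kchains n (Suc p)" by (rule kwedge_kchains[OF assms(1)])
  then show ?thesis
    unfolding kbounds_def kdiff_kwedge[OF assms, symmetric] by (rule imageI)
qed

lemma kbounds_comp_eq_kdiff_mod_range:
  assumes A: "clinear A" and comm: "\<And>i x. A (Tj i x) = Tj i (A x)"
    and Q: "\<And>x. \<exists>y. x - A y \<in> V.span Q" and Az: "A \<circ> z \<in> kbounds smul Tj lam n p"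
  obtains y c where "y \<in> kchains n (Suc p)" "c \<in> C.span (elementary_kchains n (Suc p) Q)"
    "d c = A \<circ> (z - d y)"
proof -
  obtain u where u: "u \<in> kchains n (Suc p)" "A \<circ> z = d u"
    using Az unfolding kbounds_def by blast
  obtain y where y: "y \<in> kchains n (Suc p)" "u - (A \<circ> y) \<in> C.span (elementary_kchains n (Suc p) Q)"
    using kchain_mod_range[OF A Q u(1)] by blast
  have "d (u - (A \<circ> y)) = A \<circ> (z - d y)"
    using u(2) kdiff_comp[OF A comm, of y]
    by (simp add: CC.linear_diff[OF linear_kdiff] CC.linear_diff[OF clinear_comp_left[OF A]])
  then show ?thesis using that y by blast
qed

text \<open>Once A z = d u is corrected modulo the range of A, only boundaries of chains from a fixed
  finite-dimensional space remain to be lifted through A. Hence, up to a boundary, every cycle is an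
  element of span X plus a chain with coefficients in the kernel of A.\<close>

lemma tor_fin_if_kills_homology:
  assumes A: "clinear A" and comm: "\<And>i x. A (Tj i x) = Tj i (A x)"
    and N: "finite N" "{x. A x = 0} \<subseteq> V.span N"
    and Q: "finite Q" "\<And>x. \<exists>y. x - A y \<in> V.span Q"
    and kills: "\<And>z. z \<in> kcycles smul Tj lam n p \<Longrightarrow> A \<circ> z \<in> kbounds smul Tj lam n p"
  shows "tor_fin smul Tj lam n p"
proof -
  obtain X where X: "finite X" "X \<subseteq> kchains n p"
    and lift: "\<And>c x. c \<in> C.span (elementary_kchains n (Suc p) Q) \<Longrightarrow> x \<in> kchains n p \<Longrightarrow>
      d c = A \<circ> x \<Longrightarrow> \<exists>x'\<in>C.span X. d c = A \<circ> x'"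
    using C.finite_preimages[OF finite_elementary_kchains[OF Q(1)] linear_kdiff clinear_comp_left[OF A]]
    by metis
  define G where "G = X \<union> elementary_kchains n p N"
  have "z \<in> {b + v | b v. b \<in> kbounds smul Tj lam n p \<and> v \<in> C.span G}"
    if z: "z \<in> kcycles smul Tj lam n p" for z
  proof -
    obtain y c where y: "y \<in> kchains n (Suc p)" and c: "c \<in> C.span (elementary_kchains n (Suc p) Q)"
      and dc: "d c = A \<circ> (z - d y)"
      using kbounds_comp_eq_kdiff_mod_range[OF A comm Q(2) kills[OF z]] by blast
    have dy: "d y \<in> kbounds smul Tj lam n p" "d y \<in> kchains n p"
      using y kdiff_kchains unfolding kbounds_def by auto
    have "z - d y \<in> kchains n p"
      using z dy(2) unfolding kcycles_def by (blast intro: C.subspace_diff[OF subspace_kchains])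
    then obtain x where x: "x \<in> C.span X" "A \<circ> (z - d y) = A \<circ> x"
      using lift[OF c] dc by metis
    have "z - d y - x \<in> kchains n p"
      using \<open>z - d y \<in> kchains n p\<close> x(1) C.span_minimal[OF X(2) subspace_kchains]
      by (blast intro: C.subspace_diff[OF subspace_kchains])
    then have "z - d y - x \<in> C.span (elementary_kchains n p N)"
    proof (rule kchain_in_span_elementary)
      fix J
      have "A ((z - d y - x) J) = 0"
        using fun_cong[OF x(2), of J] by (simp add: VV.linear_diff[OF A])
      then show "(z - d y - x) J \<in> V.span N" using N(2) by blast
    qed
    then have "x + (z - d y - x) \<in> C.span G"
      using x(1) unfolding G_def by (meson C.span_add C.span_mono subsetD sup_ge1 sup_ge2)
    moreover have "z = d y + (x + (z - d y - x))" by simp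
    ultimately show ?thesis using dy(1) by blast
  qed
  moreover have "finite G"
    unfolding G_def using X(1) finite_elementary_kchains[OF N(1)] by simp
  ultimately show ?thesis
    unfolding tor_fin_def
    by (intro qfin_if_subset_plus_span[OF C.vector_space_axioms subspace_kbounds]) auto
qed

end

section \<open>Koszul homology of a monoid action\<close>

locale koszul_monoid = complex_banach smul for smul :: "complex \<Rightarrow> 'v::banach \<Rightarrow> 'v" +
  fixes T :: "'h::comm_monoid_add \<Rightarrow> 'v \<Rightarrow> 'v" and w :: "nat \<Rightarrow> 'h"
    and lam :: "nat \<Rightarrow> complex" and n :: nat
  assumes clinear_T: "clinear (T a)" and T_zero: "T 0 = id" and T_add: "T (a + b) = T a \<circ> T b"
begin

lemma T_commute: "T a (T b x) = T b (T a x)"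
  using T_add[of a b] T_add[of b a] by (metis add.commute comp_apply)

sublocale koszul_complex smul "\<lambda>j. T (w j)" lam n
  by (rule koszul_complex.intro[OF complex_banach_axioms])
    (simp add: koszul_complex_axioms_def clinear_T T_commute)

definition acts_on_homology_by :: "nat \<Rightarrow> 'h \<Rightarrow> complex \<Rightarrow> bool" where
  "acts_on_homology_by p a \<mu> \<longleftrightarrow>
     (\<forall>z \<in> kcycles smul (\<lambda>j. T (w j)) lam n p.
        (T a \<circ> z) - cscale smul \<mu> z \<in> kbounds smul (\<lambda>j. T (w j)) lam n p)"

lemma acts_on_homology_by_zero: "acts_on_homology_by p 0 1"
  unfolding acts_on_homology_by_def
  by (simp add: T_zero cscale_def C.subspace_0[OF subspace_kbounds])

lemma acts_on_homology_by_generator: "i < n \<Longrightarrow> acts_on_homology_by p (w i) (lam i)"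
  unfolding acts_on_homology_by_def
proof
  fix z assume "i < n" "z \<in> kcycles smul (\<lambda>j. T (w j)) lam n p"
  moreover have "(T (w i) \<circ> z) - cscale smul (lam i) z = shifted i \<circ> z"
    by (simp add: fun_eq_iff cscale_def shifted_def)
  ultimately show "(T (w i) \<circ> z) - cscale smul (lam i) z \<in> kbounds smul (\<lambda>j. T (w j)) lam n p"
    using shifted_kcycle_in_kbounds by simp
qed

lemma acts_on_homology_by_add:
  assumes a: "acts_on_homology_by p a \<mu>" and b: "acts_on_homology_by p b \<nu>"
  shows "acts_on_homology_by p (a + b) (\<mu> * \<nu>)"
  unfolding acts_on_homology_by_def
proof
  let ?B = "kbounds smul (\<lambda>j. T (w j)) lam n p"
  fix z assume z: "z \<in> kcycles smul (\<lambda>j. T (w j)) lam n p"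
  define \<alpha> where "\<alpha> = (T a \<circ> z) - cscale smul \<mu> z"
  define \<beta> where "\<beta> = (T b \<circ> z) - cscale smul \<nu> z"
  have "\<alpha> \<in> ?B" "\<beta> \<in> ?B" using a b z unfolding acts_on_homology_by_def \<alpha>_def \<beta>_def by blast+
  have "(T (a + b) \<circ> z) - cscale smul (\<mu> * \<nu>) z = cscale smul \<nu> \<alpha> + (T a \<circ> \<beta>)"
    by (simp add: \<alpha>_def \<beta>_def T_add fun_eq_iff cscale_def VV.linear_diff[OF clinear_T]
        VV.linear_scale[OF clinear_T] V.scale_right_diff_distrib mult.commute)
  also have "\<dots> \<in> ?B"
    using \<open>\<alpha> \<in> ?B\<close> comp_kbounds[OF clinear_T T_commute \<open>\<beta> \<in> ?B\<close>]
    by (intro C.subspace_add[OF subspace_kbounds] C.subspace_scale[OF subspace_kbounds])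
  finally show "(T (a + b) \<circ> z) - cscale smul (\<mu> * \<nu>) z \<in> ?B" .
qed

lemma acts_on_homology_by_msum: "acts_on_homology_by p (msum w l n) (\<Prod>i<n. lam i ^ l i)"
proof -
  have sum: "acts_on_homology_by p (sum f I) (prod g I)"
    if "\<And>i. i \<in> I \<Longrightarrow> acts_on_homology_by p (f i) (g i)" for f g and I :: "nat set"
    using that
    by (induct I rule: infinite_finite_induct) (auto intro: acts_on_homology_by_zero acts_on_homology_by_add)
  have "acts_on_homology_by p (\<Sum>i<n. \<Sum>k<l i. w i) (\<Prod>i<n. \<Prod>k<l i. lam i)"
    by (intro sum acts_on_homology_by_generator) auto
  then show ?thesis by (simp add: msum_def)
qed

lemma tor_fin_if_fredholm:
  assumes fred: "fredholm_index0 smul (\<lambda>x. smul \<mu> x - T a x)" and acts: "acts_on_homology_by p a \<mu>"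
  shows "tor_fin smul (\<lambda>j. T (w j)) lam n p"
proof -
  let ?A = "\<lambda>x. smul \<mu> x - T a x"
  obtain N Q where N: "finite N" "{x. ?A x = 0} \<subseteq> V.span N"
    and Q: "finite Q" "\<And>x. \<exists>y. x - ?A y \<in> V.span Q"
    using fredholm_index0_finite_kernel_cokernel[OF fred] by blast
  have A: "clinear ?A" by (rule VV.linear_compose_sub[OF clinear_smul clinear_T])
  have comm: "?A (T (w i) x) = T (w i) (?A x)" for i x
    by (simp add: VV.linear_diff[OF clinear_T] VV.linear_scale[OF clinear_T] T_commute)
  have "?A \<circ> z \<in> kbounds smul (\<lambda>j. T (w j)) lam n p"
    if "z \<in> kcycles smul (\<lambda>j. T (w j)) lam n p" for z
  proof -
    have "(T a \<circ> z) - cscale smul \<mu> z \<in> kbounds smul (\<lambda>j. T (w j)) lam n p"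
      using acts that unfolding acts_on_homology_by_def by blast
    then have "- ((T a \<circ> z) - cscale smul \<mu> z) \<in> kbounds smul (\<lambda>j. T (w j)) lam n p"
      by (rule C.subspace_neg[OF subspace_kbounds])
    moreover have "?A \<circ> z = - ((T a \<circ> z) - cscale smul \<mu> z)"
      by (simp add: fun_eq_iff cscale_def)
    ultimately show ?thesis by simp
  qed
  then show ?thesis by (rule tor_fin_if_kills_homology[OF A comm N Q])
qed

end

theorem mainTheorem12:
  fixes smul :: "complex \<Rightarrow> 'v::banach \<Rightarrow> 'v"
    and T :: "'h::comm_monoid_add \<Rightarrow> 'v \<Rightarrow> 'v"
    and w :: "nat \<Rightarrow> 'h" and n :: nat and lam :: "nat \<Rightarrow> complex"
  assumes "complex_structure smul"
    and "\<forall>h. \<exists>l. h = msum w l n"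
    and "\<forall>h. bounded_clin smul (T h)"
    and "T 0 = id"
    and "\<forall>a b. T (a + b) = T a \<circ> T b"
    and "\<exists>h l. quasi_compact smul (T h) \<and> h = msum w l n \<and>
               cmod (\<Prod>i<n. lam i ^ l i) > ess_rad smul (T h)"
  shows "fredholm_character smul (\<lambda>j. T (w j)) lam n"
proof -
  interpret complex_banach smul by unfold_locales (rule assms(1))
  have "clinear (T a)" for a
    using assms(3) clinear_if_bounded_clin by blast
  then interpret koszul_monoid smul T w lam n
    using assms(4,5) complex_banach_axioms by (simp add: koszul_monoid_def koszul_monoid_axioms_def)
  obtain h l where h: "h = msum w l n" and ess: "ess_rad smul (T h) < cmod (\<Prod>i<n. lam i ^ l i)"
    using assms(6) by blast
  have "tor_fin smul (\<lambda>j. T (w j)) lam n p" for p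
    using fredholm_index0_if_ess_rad_less[OF assms(3)[rule_format] ess] acts_on_homology_by_msum
    unfolding h by (rule tor_fin_if_fredholm)
  moreover have "{p. tor_dim smul (\<lambda>j. T (w j)) lam n p \<noteq> 0} \<subseteq> {..n}"
    using tor_dim_eq_0_if_gt by (auto simp: not_less[symmetric])
  then have "finite {p. tor_dim smul (\<lambda>j. T (w j)) lam n p \<noteq> 0}"
    by (rule finite_subset) simp
  ultimately show ?thesis unfolding fredholm_character_def by blast
qed

end
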